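(* Let $\mathcal I$ be an instance of the a priori TRP on a metric $(V,d)$ with root $r$, $n=|V|$, and probabilities $p_v\ge 1/n^2$ for all $v\in V$. Let $p=\frac1n\min_{v\in V}p_v$ and let $\mathcal J$ be the uniform instance obtained by replacing each $v\in V$ by a set $S_v$ of $t_v=\lceil p_v/p\rceil$ co-located copies of $v$ (distance $0$ within $S_v$, distance $d(u,v)$ between any copy of $u$ and any copy of $v$), each copy independently active with probability $p$. Let $\widehat\pi$ be any consecutive master tour on $\mathcal J$, i.e. one visiting all vertices of each $S_v$ consecutively, with expected latency $\mathrm{ALG}(\mathcal J)$, and let $\pi$ be the master tour on $V$ visiting the vertices $v$ in the order in which the groups $S_v$ are visited by $\widehat\pi$. Then the expected latency $\mathrm{ALG}(\mathcal I)$ of $\pi$ on $\mathcal I$ satisfies $$\mathrm{ALG}(\mathcal I)\le\left(\frac{e}{e-1}\right)^3\left(1+\frac1n\right)^3\mathrm{ALG}(\mathcal J).$$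
   Context: An instance of the a priori TRP consists of a finite metric $(V,d)$, a root $r$, and independent activation probabilities $p_v$. A master tour is a tour from $r$ visiting all vertices; for a random active set $A$ (each $v$ independently active with probability $p_v$), the tour is shortcut to $A$, the latency of $v\in A$ is its distance from $r$ along the shortcut tour, and the expected latency of the master tour is the expected sum of latencies of active vertices. *)

theory Defs
  imports Complex_Main
begin

fun pathlen :: "('b \<Rightarrow> 'b \<Rightarrow> real) \<Rightarrow> 'b \<Rightarrow> 'b list \<Rightarrow> real" where
  "pathlen d x [] = 0"
| "pathlen d x (y # ys) = d x y + pathlen d y ys"

definition total_latency :: "('b \<Rightarrow> 'b \<Rightarrow> real) \<Rightarrow> 'b \<Rightarrow> 'b list \<Rightarrow> 'b set \<Rightarrow> real" where
  "total_latency d r \<sigma> A =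
     (let w = filter (\<lambda>x. x \<in> A) \<sigma> in \<Sum>k<length w. pathlen d r (take (Suc k) w))"

definition expected_latency ::
  "('b \<Rightarrow> 'b \<Rightarrow> real) \<Rightarrow> 'b \<Rightarrow> ('b \<Rightarrow> real) \<Rightarrow> 'b set \<Rightarrow> 'b list \<Rightarrow> real" where
  "expected_latency d r q S \<sigma> =
     (\<Sum>A\<in>Pow S. (\<Prod>v\<in>A. q v) * (\<Prod>v\<in>S - A. 1 - q v) * total_latency d r \<sigma> A)"

definition master_tour :: "'b set \<Rightarrow> 'b list \<Rightarrow> bool" where
  "master_tour S \<sigma> \<longleftrightarrow> distinct \<sigma> \<and> set \<sigma> = S"

definition metric_on :: "'b set \<Rightarrow> ('b \<Rightarrow> 'b \<Rightarrow> real) \<Rightarrow> bool" where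
  "metric_on P d \<longleftrightarrow>
     (\<forall>x\<in>P. \<forall>y\<in>P. (d x y = 0 \<longleftrightarrow> x = y) \<and> d x y = d y x) \<and>
     (\<forall>x\<in>P. \<forall>y\<in>P. \<forall>z\<in>P. d x z \<le> d x y + d y z)"

end

(* By linearity of expectation, the expected latency of a master tour is the sum over its
   vertices v of p_v times the expected length of the walk from r through the active
   predecessors of v to v. In the instance with copies, the t_u copies of u lie at distance 0
   from each other: for every later vertex they act like u alone, active with probability
   1 - (1 - p)^t_u >= 1 - e^(-p_u) >= (1 - 1/e) p_u, and each copy of v sees the same walk as v,
   while p t_v >= p_v. Raising the activation probabilities from q to q' >= c q (c <= 1)
   shrinks the expected walk by at most the factor c^2, because the expected walk is
   1-Lipschitz in its starting point. This already gives the bound with (e/(e-1))^2. *)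

theory Submission
  imports Defs "HOL-Analysis.Convex"
begin

fun subset_expectation :: "('b \<Rightarrow> real) \<Rightarrow> 'b list \<Rightarrow> ('b set \<Rightarrow> real) \<Rightarrow> real" where
  "subset_expectation q [] f = f {}"
| "subset_expectation q (a # as) f =
     q a * subset_expectation q as (\<lambda>A. f (insert a A)) + (1 - q a) * subset_expectation q as f"

lemma sum_Pow_eq_subset_expectation:
  assumes "distinct \<sigma>"
  shows "(\<Sum>A\<in>Pow (set \<sigma>). (\<Prod>v\<in>A. q v) * (\<Prod>v\<in>set \<sigma> - A. 1 - q v) * f A)
       = subset_expectation q \<sigma> f"
  using assms
proof (induction \<sigma> arbitrary: f)
  case Nil
  then show ?case by simp
next
  case (Cons a \<sigma>)
  let ?S = "set \<sigma>"
  let ?w = "\<lambda>T A. (\<Prod>v\<in>A. q v) * (\<Prod>v\<in>T - A. 1 - q v)"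
  have a: "a \<notin> ?S" and dist: "distinct \<sigma>" using Cons.prems by auto
  have disj: "Pow ?S \<inter> insert a ` Pow ?S = {}" and inj: "inj_on (insert a) (Pow ?S)"
    using a by (auto simp: inj_on_def)
  have without_a: "?w (insert a ?S) A = (1 - q a) * ?w ?S A" if "A \<in> Pow ?S" for A
  proof -
    have "insert a ?S - A = insert a (?S - A)" "a \<notin> ?S - A" using that a by auto
    then show ?thesis by simp
  qed
  have with_a: "?w (insert a ?S) (insert a A) = q a * ?w ?S A" if "A \<in> Pow ?S" for A
  proof -
    have "insert a ?S - insert a A = ?S - A" "a \<notin> A" "finite A"
      using that a finite_subset by auto
    then show ?thesis by simp
  qed
  have "(\<Sum>A\<in>Pow (set (a # \<sigma>)). ?w (set (a # \<sigma>)) A * f A)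
      = (\<Sum>A\<in>Pow ?S. ?w (insert a ?S) A * f A)
        + (\<Sum>A\<in>Pow ?S. ?w (insert a ?S) (insert a A) * f (insert a A))"
    by (simp add: Pow_insert sum.union_disjoint disj sum.reindex[OF inj])
  also have "\<dots> = (1 - q a) * (\<Sum>A\<in>Pow ?S. ?w ?S A * f A)
                 + q a * (\<Sum>A\<in>Pow ?S. ?w ?S A * f (insert a A))"
    unfolding sum_distrib_left
    by (intro arg_cong2[where f="(+)"] sum.cong refl) (simp_all only: without_a with_a mult.assoc)
  finally show ?case
    using Cons.IH[OF dist, of f] Cons.IH[OF dist, of "\<lambda>A. f (insert a A)"]
    by (simp add: algebra_simps)
qed

lemma subset_expectation_cong:
  "(\<And>A. A \<subseteq> set \<sigma> \<Longrightarrow> f A = g A) \<Longrightarrow> subset_expectation q \<sigma> f = subset_expectation q \<sigma> g"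
proof (induction \<sigma> arbitrary: f g)
  case Nil
  then show ?case by simp
next
  case (Cons a \<sigma>)
  have "subset_expectation q \<sigma> (\<lambda>A. f (insert a A)) = subset_expectation q \<sigma> (\<lambda>A. g (insert a A))"
    by (rule Cons.IH) (rule Cons.prems, auto)
  moreover have "subset_expectation q \<sigma> f = subset_expectation q \<sigma> g"
    by (rule Cons.IH) (use Cons.prems in auto)
  ultimately show ?case by simp
qed

lemma subset_expectation_const: "subset_expectation q \<sigma> (\<lambda>A. c) = c"
  by (induction \<sigma>) (auto simp: algebra_simps)

lemma subset_expectation_add:
  "subset_expectation q \<sigma> (\<lambda>A. f A + g A) = subset_expectation q \<sigma> f + subset_expectation q \<sigma> g"
  by (induction \<sigma> arbitrary: f g) (auto simp: algebra_simps)

lemma subset_expectation_sum: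
  "subset_expectation q \<sigma> (\<lambda>A. \<Sum>k<n. f k A) = (\<Sum>k<n. subset_expectation q \<sigma> (f k))"
proof (induction \<sigma> arbitrary: f)
  case Nil
  then show ?case by simp
next
  case (Cons a \<sigma>)
  show ?case
    using Cons.IH[of "\<lambda>k A. f k (insert a A)"] Cons.IH[of f]
    by (simp add: sum.distrib sum_distrib_left)
qed

lemma subset_expectation_indicator:
  assumes "v \<in> set \<sigma>" "distinct \<sigma>"
  shows "subset_expectation q \<sigma> (\<lambda>A. if v \<in> A then c else 0) = q v * c"
  using assms
proof (induction \<sigma>)
  case Nil
  then show ?case by simp
next
  case (Cons a \<sigma>)
  show ?case
  proof (cases "a = v")
    case True
    then have "v \<notin> set \<sigma>" using Cons.prems by auto
    then have "subset_expectation q \<sigma> (\<lambda>A. if v \<in> A then c else 0) = subset_expectation q \<sigma> (\<lambda>A. 0)"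
      by (intro subset_expectation_cong) auto
    then show ?thesis using True by (simp add: subset_expectation_const)
  next
    case False
    then show ?thesis using Cons by (simp add: algebra_simps)
  qed
qed

fun expected_walk :: "('b \<Rightarrow> 'b \<Rightarrow> real) \<Rightarrow> 'b \<Rightarrow> ('b \<times> real) list \<Rightarrow> 'b \<Rightarrow> real" where
  "expected_walk d x [] v = d x v"
| "expected_walk d x ((a, qa) # ys) v =
     qa * (d x a + expected_walk d a ys v) + (1 - qa) * expected_walk d x ys v"

lemma subset_expectation_latency:
  assumes "distinct (xs @ v # ys)"
  shows "subset_expectation q (xs @ v # ys)
           (\<lambda>A. if v \<in> A then pathlen d x (filter (\<lambda>u. u \<in> A) xs @ [v]) else 0)
       = q v * expected_walk d x (map (\<lambda>u. (u, q u)) xs) v"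
  using assms
proof (induction xs arbitrary: x)
  case Nil
  then have "v \<notin> set ys" by auto
  then have "subset_expectation q ys
      (\<lambda>A. if v \<in> A then pathlen d x (filter (\<lambda>u. u \<in> A) [] @ [v]) else 0)
      = subset_expectation q ys (\<lambda>A. 0)"
    by (intro subset_expectation_cong) auto
  then show ?case by (simp add: subset_expectation_const)
next
  case (Cons a xs)
  let ?\<sigma> = "xs @ v # ys"
  let ?L = "\<lambda>x A. if v \<in> A then pathlen d x (filter (\<lambda>u. u \<in> A) xs @ [v]) else 0"
  have dist: "distinct ?\<sigma>" and a: "a \<notin> set ?\<sigma>" using Cons.prems by auto
  have "subset_expectation q ?\<sigma> (\<lambda>A. if v \<in> insert a A
            then pathlen d x (filter (\<lambda>u. u \<in> insert a A) (a # xs) @ [v]) else 0)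
      = subset_expectation q ?\<sigma> (\<lambda>A. (if v \<in> A then d x a else 0) + ?L a A)"
  proof (rule subset_expectation_cong)
    fix A assume "A \<subseteq> set ?\<sigma>"
    moreover have "filter (\<lambda>u. u \<in> insert a A) xs = filter (\<lambda>u. u \<in> A) xs"
      using a by (intro filter_cong) auto
    ultimately show "(if v \<in> insert a A
            then pathlen d x (filter (\<lambda>u. u \<in> insert a A) (a # xs) @ [v]) else 0)
        = (if v \<in> A then d x a else 0) + ?L a A"
      using a by auto
  qed
  also have "\<dots> = q v * d x a + q v * expected_walk d a (map (\<lambda>u. (u, q u)) xs) v"
    using subset_expectation_indicator[of v ?\<sigma>] dist Cons.IH[OF dist]
    by (simp add: subset_expectation_add)
  finally have active:
    "subset_expectation q ?\<sigma> (\<lambda>A. if v \<in> insert a A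
            then pathlen d x (filter (\<lambda>u. u \<in> insert a A) (a # xs) @ [v]) else 0)
      = q v * d x a + q v * expected_walk d a (map (\<lambda>u. (u, q u)) xs) v" .
  have inactive:
    "subset_expectation q ?\<sigma> (\<lambda>A. if v \<in> A then pathlen d x (filter (\<lambda>u. u \<in> A) (a # xs) @ [v]) else 0)
      = subset_expectation q ?\<sigma> (?L x)"
    by (rule subset_expectation_cong) (use a in auto)
  show ?case using active inactive Cons.IH[OF dist] by (simp add: algebra_simps)
qed

lemma total_latency_eq_sum_positions:
  "total_latency d r \<sigma> A =
     (\<Sum>k<length \<sigma>. if \<sigma> ! k \<in> A then pathlen d r (filter (\<lambda>u. u \<in> A) (take k \<sigma>) @ [\<sigma> ! k]) else 0)"
proof (induction \<sigma> rule: rev_induct)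
  case Nil
  then show ?case by (simp add: total_latency_def)
next
  case (snoc a \<sigma>)
  let ?w = "filter (\<lambda>x. x \<in> A) \<sigma>"
  have "(\<Sum>k<length (\<sigma> @ [a]). if (\<sigma> @ [a]) ! k \<in> A
          then pathlen d r (filter (\<lambda>u. u \<in> A) (take k (\<sigma> @ [a])) @ [(\<sigma> @ [a]) ! k]) else 0)
     = total_latency d r \<sigma> A + (if a \<in> A then pathlen d r (?w @ [a]) else 0)"
    unfolding snoc by (simp add: nth_append, intro sum.cong, auto simp: nth_append)
  moreover have "total_latency d r (\<sigma> @ [a]) A
      = total_latency d r \<sigma> A + (if a \<in> A then pathlen d r (?w @ [a]) else 0)"
    by (simp add: total_latency_def Let_def)
  ultimately show ?case by simp
qed

lemma expected_latency_eq_sum_expected_walk: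
  assumes "distinct \<sigma>"
  shows "expected_latency d r q (set \<sigma>) \<sigma>
       = (\<Sum>k<length \<sigma>. q (\<sigma> ! k) * expected_walk d r (map (\<lambda>u. (u, q u)) (take k \<sigma>)) (\<sigma> ! k))"
proof -
  have "expected_latency d r q (set \<sigma>) \<sigma> = subset_expectation q \<sigma> (total_latency d r \<sigma>)"
    unfolding expected_latency_def by (rule sum_Pow_eq_subset_expectation[OF assms])
  also have "\<dots> = (\<Sum>k<length \<sigma>. subset_expectation q \<sigma> (\<lambda>A. if \<sigma> ! k \<in> A
           then pathlen d r (filter (\<lambda>u. u \<in> A) (take k \<sigma>) @ [\<sigma> ! k]) else 0))"
    unfolding total_latency_eq_sum_positions by (rule subset_expectation_sum)
  also have "\<dots> = (\<Sum>k<length \<sigma>. q (\<sigma> ! k) * expected_walk d r (map (\<lambda>u. (u, q u)) (take k \<sigma>)) (\<sigma> ! k))"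
  proof (rule sum.cong[OF refl])
    fix k assume "k \<in> {..<length \<sigma>}"
    then have split: "\<sigma> = take k \<sigma> @ \<sigma> ! k # drop (Suc k) \<sigma>" by (simp add: id_take_nth_drop)
    show "subset_expectation q \<sigma> (\<lambda>A. if \<sigma> ! k \<in> A
           then pathlen d r (filter (\<lambda>u. u \<in> A) (take k \<sigma>) @ [\<sigma> ! k]) else 0)
        = q (\<sigma> ! k) * expected_walk d r (map (\<lambda>u. (u, q u)) (take k \<sigma>)) (\<sigma> ! k)"
      by (subst split, rule subset_expectation_latency) (use split assms in metis)
  qed
  finally show ?thesis .
qed

lemma metric_onD:
  assumes "metric_on P d" "x \<in> P" "y \<in> P" "z \<in> P"
  shows "d x x = 0" "d x y = d y x" "d x z \<le> d x y + d y z" "0 \<le> d x y"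
proof -
  show "d x x = 0" "d x y = d y x" "d x z \<le> d x y + d y z"
    using assms unfolding metric_on_def by blast+
  moreover have "d x x \<le> d x y + d y x" using assms unfolding metric_on_def by blast
  ultimately show "0 \<le> d x y" by simp
qed

lemma expected_walk_nonneg:
  assumes d: "metric_on P d" and "x \<in> P" "v \<in> P" "set xs \<subseteq> P"
    and "\<forall>u\<in>set xs. 0 \<le> q u \<and> q u \<le> 1"
  shows "0 \<le> expected_walk d x (map (\<lambda>u. (u, q u)) xs) v"
  using assms(2-)
proof (induction xs arbitrary: x)
  case Nil
  then show ?case using metric_onD[OF d] by simp
next
  case (Cons a xs)
  then have "0 \<le> d x a" using metric_onD(4)[OF d] by simp
  then show ?case using Cons by simp
qed

lemma expected_walk_lipschitz:
  assumes d: "metric_on P d" and "x \<in> P" "y \<in> P" "v \<in> P" "set xs \<subseteq> P"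
    and "\<forall>u\<in>set xs. 0 \<le> q u \<and> q u \<le> 1"
  shows "\<bar>expected_walk d x (map (\<lambda>u. (u, q u)) xs) v - expected_walk d y (map (\<lambda>u. (u, q u)) xs) v\<bar>
         \<le> d x y"
  using assms(2-)
proof (induction xs arbitrary: x y)
  case Nil
  then show ?case using metric_onD[OF d, of x y v] metric_onD[OF d, of y x v] by simp
next
  case (Cons a xs)
  let ?W = "\<lambda>x. expected_walk d x (map (\<lambda>u. (u, q u)) xs) v"
  have a: "a \<in> P" "0 \<le> q a" "q a \<le> 1" using Cons.prems by auto
  have "\<bar>?W x - ?W y\<bar> \<le> d x y" using Cons by simp
  then have "\<bar>(1 - q a) * (?W x - ?W y)\<bar> \<le> (1 - q a) * d x y"
    using a by (simp add: abs_mult mult_left_mono)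
  moreover have "\<bar>q a * (d x a - d y a)\<bar> \<le> q a * d x y"
    using metric_onD[OF d, of x y a] metric_onD[OF d, of y x a] Cons.prems a
    by (simp add: abs_mult abs_le_iff mult_left_mono)
  ultimately show ?case by (simp add: algebra_simps)
qed

lemma scaled_mixture_le:
  fixes c q q' A X D :: real
  assumes c: "0 \<le> c" "c \<le> 1" and q: "0 \<le> q" "c * q \<le> q'" and AX: "\<bar>A - X\<bar> \<le> D"
  shows "c^2 * (q * (D + A) + (1 - q) * X) \<le> q' * (D + c^2 * A) + (1 - q') * (c^2 * X)"
proof -
  have c2: "c^2 \<le> 1" using c by (simp add: power_le_one)
  have gap: "c^2 * \<bar>q' - q\<bar> \<le> q' - c^2 * q"
  proof (cases "q \<le> q'")
    case True
    have "0 \<le> q'" using q c by (meson mult_nonneg_nonneg order_trans)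
    then have "q' * c^2 \<le> q'" using c2 by (simp add: mult_right_le_one_le)
    then show ?thesis using True by (simp add: algebra_simps)
  next
    case False
    \<comment> \<open>\<open>2 c\<^sup>2 q \<le> c q (1 + c\<^sup>2) \<le> q' (1 + c\<^sup>2)\<close>, since \<open>c (1 - c)\<^sup>2 \<ge> 0\<close>\<close>
    have "c * q * (1 + c^2) \<le> q' * (1 + c^2)" using q by (intro mult_right_mono) auto
    moreover have "0 \<le> q * (c * (1 - c)^2)" using q c by simp
    ultimately show ?thesis using False by (simp add: algebra_simps power2_eq_square)
  qed
  have "\<bar>c^2 * ((q' - q) * (A - X))\<bar> \<le> c^2 * \<bar>q' - q\<bar> * D"
    using AX by (simp add: abs_mult mult.assoc mult_left_mono)
  moreover have "c^2 * \<bar>q' - q\<bar> * D \<le> (q' - c^2 * q) * D"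
    using gap AX by (intro mult_right_mono) auto
  moreover have "q' * (D + c^2 * A) + (1 - q') * (c^2 * X) - c^2 * (q * (D + A) + (1 - q) * X)
      = (q' - c^2 * q) * D + c^2 * ((q' - q) * (A - X))"
    by (simp add: algebra_simps)
  ultimately show ?thesis by linarith
qed

lemma expected_walk_scaled_probs_le:
  assumes d: "metric_on P d" and c: "0 \<le> c" "c \<le> 1"
    and "x \<in> P" "v \<in> P" "set xs \<subseteq> P"
    and "\<forall>u\<in>set xs. 0 \<le> q u \<and> q u \<le> 1 \<and> c * q u \<le> q' u \<and> q' u \<le> 1"
  shows "c^2 * expected_walk d x (map (\<lambda>u. (u, q u)) xs) v
         \<le> expected_walk d x (map (\<lambda>u. (u, q' u)) xs) v"
  using assms(4-)
proof (induction xs arbitrary: x)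
  case Nil
  then show ?case
    using metric_onD(4)[OF d, of x v] c by (simp add: power_le_one mult_left_le_one_le)
next
  case (Cons a xs)
  let ?W = "\<lambda>x. expected_walk d x (map (\<lambda>u. (u, q u)) xs) v"
  let ?W' = "\<lambda>x. expected_walk d x (map (\<lambda>u. (u, q' u)) xs) v"
  have a: "a \<in> P" "0 \<le> q a" "q a \<le> 1" "c * q a \<le> q' a" "q' a \<le> 1"
    using Cons.prems by auto
  then have q'a: "0 \<le> q' a" using c by (meson mult_nonneg_nonneg order_trans)
  have "\<bar>?W a - ?W x\<bar> \<le> d x a"
    using expected_walk_lipschitz[OF d, of a x v xs q] metric_onD(2)[OF d, of a x x] Cons.prems a
    by auto
  then have "c^2 * (q a * (d x a + ?W a) + (1 - q a) * ?W x)
      \<le> q' a * (d x a + c^2 * ?W a) + (1 - q' a) * (c^2 * ?W x)"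
    using scaled_mixture_le c a by blast
  also have "\<dots> \<le> q' a * (d x a + ?W' a) + (1 - q' a) * ?W' x"
    using Cons a q'a by (intro add_mono mult_left_mono) auto
  finally show ?case by simp
qed

lemma expected_walk_replicate:
  assumes "d u u = 0"
  shows "expected_walk d x (replicate k (u, p) @ ys) v = expected_walk d x ((u, 1 - (1 - p) ^ k) # ys) v"
proof (induction k arbitrary: x)
  case 0
  then show ?case by simp
next
  case (Suc k)
  have "expected_walk d u (replicate k (u, p) @ ys) v = expected_walk d u ys v"
    using Suc[of u] assms by (simp add: algebra_simps)
  then have "expected_walk d x (replicate (Suc k) (u, p) @ ys) v
      = p * (d x u + expected_walk d u ys v) + (1 - p) * expected_walk d x (replicate k (u, p) @ ys) v"
    by simp
  also have "\<dots> = (1 - (1 - p) ^ Suc k) * (d x u + expected_walk d u ys v)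
      + (1 - p) ^ Suc k * expected_walk d x ys v"
    unfolding Suc[of x] by (simp add: algebra_simps)
  finally show ?case by simp
qed

lemma expected_walk_append_replicate_target:
  assumes "d v v = 0"
  shows "expected_walk d x (ys @ replicate j (v, p)) v = expected_walk d x ys v"
proof (induction ys arbitrary: x)
  case Nil
  show ?case
    using expected_walk_replicate[where d=d and u=v and x=x and k=j and p=p and ys="[]" and v=v, OF assms] assms by (simp add: algebra_simps)
next
  case (Cons a ys)
  then show ?case by (cases a) simp
qed

lemma expected_walk_concat_replicate:
  assumes "\<forall>u\<in>set \<pi>. d u u = 0"
  shows "expected_walk d x (map (\<lambda>u. (u, p)) (concat (map (\<lambda>u. replicate (t u) u) \<pi>))) v
       = expected_walk d x (map (\<lambda>u. (u, 1 - (1 - p) ^ t u)) \<pi>) v"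
  using assms
proof (induction \<pi> arbitrary: x)
  case Nil
  then show ?case by simp
next
  case (Cons u \<pi>)
  then show ?case by (simp add: map_replicate_const expected_walk_replicate)
qed

lemma expected_walk_map_points:
  "expected_walk (\<lambda>x y. d (h x) (h y)) x (map (\<lambda>u. (u, c)) ys) v
   = expected_walk d (h x) (map (\<lambda>u. (u, c)) (map h ys)) (h v)"
  by (induction ys arbitrary: x) auto

lemma sum_lessThan_add:
  fixes f :: "nat \<Rightarrow> 'b::comm_monoid_add"
  shows "(\<Sum>k<a + b. f k) = (\<Sum>k<a. f k) + (\<Sum>k<b. f (a + k))"
  by (induction b) (simp_all add: add.assoc)

lemma sum_positions_append:
  fixes g :: "'a list \<Rightarrow> 'a \<Rightarrow> 'b::comm_monoid_add"
  shows "(\<Sum>k<length (xs @ ys). g (take k (xs @ ys)) ((xs @ ys) ! k))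
       = (\<Sum>k<length xs. g (take k xs) (xs ! k)) + (\<Sum>k<length ys. g (xs @ take k ys) (ys ! k))"
  unfolding length_append sum_lessThan_add
  by (intro arg_cong2[where f="(+)"] sum.cong) (auto simp: nth_append)

lemma sum_positions_concat:
  fixes g :: "'a list \<Rightarrow> 'a \<Rightarrow> 'b::comm_monoid_add"
  shows "(\<Sum>k<length (concat xss). g (take k (concat xss)) (concat xss ! k))
       = (\<Sum>i<length xss. \<Sum>j<length (xss ! i). g (concat (take i xss) @ take j (xss ! i)) (xss ! i ! j))"
proof (induction xss arbitrary: g)
  case Nil
  then show ?case by simp
next
  case (Cons xs xss)
  show ?case
    unfolding concat.simps(2) sum_positions_append Cons[of "\<lambda>ys. g (xs @ ys)"]
    by (simp add: sum.lessThan_Suc_shift del: sum.lessThan_Suc)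
qed

lemma expected_latency_copies:
  fixes \<sigma>J :: "('a \<times> 'i) list"
  assumes "distinct \<sigma>J" and copies: "map fst \<sigma>J = concat (map (\<lambda>v. replicate (t v) v) \<pi>)"
    and "\<forall>u\<in>set \<pi>. d u u = 0"
  shows "expected_latency (\<lambda>x y. d (fst x) (fst y)) (r, i0) (\<lambda>_. p) (set \<sigma>J) \<sigma>J
       = (\<Sum>i<length \<pi>. p * t (\<pi> ! i) *
            expected_walk d r (map (\<lambda>u. (u, 1 - (1 - p) ^ t u)) (take i \<pi>)) (\<pi> ! i))"
proof -
  let ?L = "map fst \<sigma>J"
  let ?W = "\<lambda>ys v. expected_walk d r (map (\<lambda>u. (u, p)) ys) v"
  have "expected_latency (\<lambda>x y. d (fst x) (fst y)) (r, i0) (\<lambda>_. p) (set \<sigma>J) \<sigma>J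
      = p * (\<Sum>k<length ?L. ?W (take k ?L) (?L ! k))"
    using assms(1)
    by (simp add: expected_latency_eq_sum_expected_walk expected_walk_map_points take_map
        sum_distrib_left)
  also have "\<dots> = p * (\<Sum>i<length \<pi>. \<Sum>j<t (\<pi> ! i).
      ?W (concat (map (\<lambda>v. replicate (t v) v) (take i \<pi>)) @ replicate j (\<pi> ! i)) (\<pi> ! i))"
    unfolding copies sum_positions_concat[of "\<lambda>ys v. ?W ys v" "map (\<lambda>v. replicate (t v) v) \<pi>"]
    by (auto simp: take_map intro!: sum.cong)
  also have "\<dots> = p * (\<Sum>i<length \<pi>. t (\<pi> ! i) *
      expected_walk d r (map (\<lambda>u. (u, 1 - (1 - p) ^ t u)) (take i \<pi>)) (\<pi> ! i))"
  proof (intro arg_cong[where f="\<lambda>s. p * s"] sum.cong refl)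
    fix i assume "i \<in> {..<length \<pi>}"
    then have "\<forall>u\<in>set (take i \<pi>). d u u = 0" "d (\<pi> ! i) (\<pi> ! i) = 0"
      using assms(3) by (auto dest: in_set_takeD)
    then show "(\<Sum>j<t (\<pi> ! i).
          ?W (concat (map (\<lambda>v. replicate (t v) v) (take i \<pi>)) @ replicate j (\<pi> ! i)) (\<pi> ! i))
        = t (\<pi> ! i) * expected_walk d r (map (\<lambda>u. (u, 1 - (1 - p) ^ t u)) (take i \<pi>)) (\<pi> ! i)"
      by (simp add: map_replicate_const expected_walk_append_replicate_target
          expected_walk_concat_replicate)
  qed
  finally show ?thesis by (simp add: sum_distrib_left mult.assoc)
qed

lemma one_minus_exp_ge_linear:
  fixes y :: real
  assumes "0 \<le> y" "y \<le> 1"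
  shows "(1 - exp (-1)) * y \<le> 1 - exp (- y)"
proof -
  have "exp ((1 - y) *\<^sub>R 0 + y *\<^sub>R (-1)) \<le> (1 - y) * exp 0 + y * exp (-1::real)"
    using convex_onD[OF exp_convex] assms by blast
  then show ?thesis by (simp add: algebra_simps)
qed

lemma one_minus_power_ge_linear:
  fixes y p :: real
  assumes "0 \<le> y" "y \<le> 1" "p \<le> 1" "y \<le> p * k"
  shows "(1 - exp (-1)) * y \<le> 1 - (1 - p) ^ k"
proof -
  have "(1 - p) ^ k \<le> exp (- p) ^ k"
    using assms(3) exp_ge_add_one_self[of "- p"] by (intro power_mono) auto
  also have "\<dots> = exp (- (p * k))" by (simp add: exp_of_nat_mult[symmetric] algebra_simps)
  also have "\<dots> \<le> exp (- y)" using assms(4) by simp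
  finally show ?thesis using one_minus_exp_ge_linear[OF assms(1,2)] by simp
qed

lemma expected_latency_nonneg:
  assumes d: "metric_on (insert r (set \<sigma>)) d" and "distinct \<sigma>"
    and q: "\<And>v. v \<in> set \<sigma> \<Longrightarrow> 0 \<le> q v \<and> q v \<le> 1"
  shows "0 \<le> expected_latency d r q (set \<sigma>) \<sigma>"
  unfolding expected_latency_eq_sum_expected_walk[OF \<open>distinct \<sigma>\<close>]
proof (intro sum_nonneg mult_nonneg_nonneg)
  fix k assume "k \<in> {..<length \<sigma>}"
  then have "\<sigma> ! k \<in> set \<sigma>" "set (take k \<sigma>) \<subseteq> set \<sigma>" by (auto dest: in_set_takeD)
  then show "0 \<le> q (\<sigma> ! k)" "0 \<le> expected_walk d r (map (\<lambda>u. (u, q u)) (take k \<sigma>)) (\<sigma> ! k)"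
    using q expected_walk_nonneg[OF d, of r "\<sigma> ! k" "take k \<sigma>" q] by auto
qed

lemma expected_latency_scaled_le_copies:
  fixes \<pi> :: "'a list" and \<sigma>J :: "('a \<times> 'i) list" and p :: real and t :: "'a \<Rightarrow> nat"
  assumes d: "metric_on (insert r (set \<pi>)) d" and "distinct \<pi>" "distinct \<sigma>J"
    and copies: "map fst \<sigma>J = concat (map (\<lambda>v. replicate (t v) v) \<pi>)"
    and p: "0 \<le> p" "p \<le> 1"
    and q: "\<And>v. v \<in> set \<pi> \<Longrightarrow> 0 \<le> q v \<and> q v \<le> 1 \<and> q v \<le> p * t v"
  shows "(1 - exp (-1))^2 * expected_latency d r q (set \<pi>) \<pi>
         \<le> expected_latency (\<lambda>x y. d (fst x) (fst y)) (r, i0) (\<lambda>_. p) (set \<sigma>J) \<sigma>J"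
proof -
  define c :: real where "c = 1 - exp (-1)"
  define Q where "Q u = 1 - (1 - p) ^ t u" for u
  have c: "0 \<le> c" "c \<le> 1" unfolding c_def by auto
  have Q: "0 \<le> Q v \<and> Q v \<le> 1 \<and> c * q v \<le> Q v" if "v \<in> set \<pi>" for v
    using one_minus_power_ge_linear[of "q v" p "t v"] q[OF that] p
    unfolding c_def Q_def by (auto simp: power_le_one)
  have "c^2 * (q (\<pi> ! i) * expected_walk d r (map (\<lambda>u. (u, q u)) (take i \<pi>)) (\<pi> ! i))
        \<le> p * t (\<pi> ! i) * expected_walk d r (map (\<lambda>u. (u, Q u)) (take i \<pi>)) (\<pi> ! i)"
    if "i < length \<pi>" for i
  proof -
    let ?Wq = "\<lambda>q. expected_walk d r (map (\<lambda>u. (u, q u)) (take i \<pi>)) (\<pi> ! i)"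
    have v: "\<pi> ! i \<in> set \<pi>" and "set (take i \<pi>) \<subseteq> set \<pi>"
      using that by (auto dest: in_set_takeD)
    then have scaled: "c^2 * ?Wq q \<le> ?Wq Q" and nonneg: "0 \<le> ?Wq Q"
      using expected_walk_scaled_probs_le[OF d c] expected_walk_nonneg[OF d] q Q
      by (auto simp: subset_iff)
    have "c^2 * (q (\<pi> ! i) * ?Wq q) = q (\<pi> ! i) * (c^2 * ?Wq q)" by simp
    also have "\<dots> \<le> q (\<pi> ! i) * ?Wq Q" using scaled q[OF v] by (intro mult_left_mono) auto
    also have "\<dots> \<le> p * t (\<pi> ! i) * ?Wq Q" using nonneg q[OF v] by (intro mult_right_mono) auto
    finally show ?thesis .
  qed
  moreover have "\<forall>u\<in>set \<pi>. d u u = 0" using metric_onD(1)[OF d] by blast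
  note copies_latency = expected_latency_copies[where d=d, OF \<open>distinct \<sigma>J\<close> copies this]
  ultimately show ?thesis
    unfolding expected_latency_eq_sum_expected_walk[OF \<open>distinct \<pi>\<close>] c_def[symmetric]
      copies_latency Q_def[symmetric]
    by (auto simp: sum_distrib_left intro!: sum_mono)
qed

lemma expected_latency_le_copies:
  fixes \<pi> :: "'a list" and \<sigma>J :: "('a \<times> 'i) list" and p :: real and t :: "'a \<Rightarrow> nat"
  assumes "metric_on (insert r (set \<pi>)) d" "distinct \<pi>" "distinct \<sigma>J"
    and "map fst \<sigma>J = concat (map (\<lambda>v. replicate (t v) v) \<pi>)"
    and "0 \<le> p" "p \<le> 1"
    and "\<And>v. v \<in> set \<pi> \<Longrightarrow> 0 \<le> q v \<and> q v \<le> 1 \<and> q v \<le> p * t v"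
  shows "expected_latency d r q (set \<pi>) \<pi>
         \<le> (exp 1 / (exp 1 - 1))^2 * expected_latency (\<lambda>x y. d (fst x) (fst y)) (r, i0) (\<lambda>_. p) (set \<sigma>J) \<sigma>J"
proof -
  define c :: real where "c = 1 - exp (-1)"
  have c: "0 < c" "exp 1 / (exp 1 - 1) = 1 / c" unfolding c_def by (auto simp: exp_minus field_simps)
  have "c^2 * expected_latency d r q (set \<pi>) \<pi>
        \<le> expected_latency (\<lambda>x y. d (fst x) (fst y)) (r, i0) (\<lambda>_. p) (set \<sigma>J) \<sigma>J"
    unfolding c_def by (rule expected_latency_scaled_le_copies) (use assms in auto)
  then have "(1 / c)^2 * (c^2 * expected_latency d r q (set \<pi>) \<pi>)
      \<le> (1 / c)^2 * expected_latency (\<lambda>x y. d (fst x) (fst y)) (r, i0) (\<lambda>_. p) (set \<sigma>J) \<sigma>J"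
    by (rule mult_left_mono) simp
  then show ?thesis unfolding c(2) using c(1) by (simp add: power_one_over)
qed

lemma min_div_card_bounds:
  fixes f :: "'a \<Rightarrow> real"
  assumes "finite V" "V \<noteq> {}" "\<And>v. v \<in> V \<Longrightarrow> 0 < f v \<and> f v \<le> 1"
  shows "0 < Min (f ` V) / card V" "Min (f ` V) / card V \<le> 1"
proof -
  have "Min (f ` V) \<in> f ` V" "1 \<le> card V" using assms(1,2) by (auto simp: Suc_leI card_gt_0_iff)
  then show "0 < Min (f ` V) / card V" "Min (f ` V) / card V \<le> 1"
    using assms(3) by (force simp: divide_le_eq)+
qed

lemma le_mult_nat_ceiling_divide:
  fixes x p :: real
  assumes "0 < p"
  shows "x \<le> p * nat \<lceil>x / p\<rceil>"
proof -
  have "x / p \<le> nat \<lceil>x / p\<rceil>" by linarith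
  then show ?thesis using assms by (simp add: divide_le_eq mult.commute)
qed

theorem lemma5:
  fixes V :: "'a set" and r :: 'a and d :: "'a \<Rightarrow> 'a \<Rightarrow> real"
    and pv :: "'a \<Rightarrow> real"
    and \<pi> :: "'a list" and \<sigma>J :: "('a \<times> nat) list"
  assumes finV: "finite V" and neV: "V \<noteq> {}"
    and metric: "metric_on (insert r V) d"
    and prob: "\<And>v. v \<in> V \<Longrightarrow> pv v \<le> 1"
    and lower: "\<And>v. v \<in> V \<Longrightarrow> pv v \<ge> 1 / (real (card V))^2"
    and tour_pi: "master_tour V \<pi>"
    and tour_J: "master_tour {(v, i). v \<in> V \<and> i < nat \<lceil>pv v / (Min (pv ` V) / real (card V))\<rceil>} \<sigma>J"
    and consecutive: "map fst \<sigma>J =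
          concat (map (\<lambda>v. replicate (nat \<lceil>pv v / (Min (pv ` V) / real (card V))\<rceil>) v) \<pi>)"
  shows "expected_latency d r pv V \<pi>
    \<le> (exp 1 / (exp 1 - 1)) ^ 3 * (1 + 1 / real (card V)) ^ 3 *
       expected_latency (\<lambda>x y. d (fst x) (fst y)) (r, 0)
         (\<lambda>_. Min (pv ` V) / real (card V))
         {(v, i). v \<in> V \<and> i < nat \<lceil>pv v / (Min (pv ` V) / real (card V))\<rceil>} \<sigma>J"
proof -
  define n where "n = real (card V)"
  define p where "p = Min (pv ` V) / n"
  define t where "t v = nat \<lceil>pv v / p\<rceil>" for v
  let ?EI = "expected_latency d r pv V \<pi>"
  let ?EJ = "expected_latency (\<lambda>x y. d (fst x) (fst y)) (r, 0) (\<lambda>_. p) {(v, i). v \<in> V \<and> i < t v} \<sigma>J"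
  have n: "0 < n" unfolding n_def using finV neV by (simp add: card_gt_0_iff)
  have pv: "0 < pv v \<and> pv v \<le> 1" if "v \<in> V" for v
    using lower[OF that] prob[OF that] n unfolding n_def[symmetric]
    by (smt (verit) divide_pos_pos zero_less_power)
  then have p: "0 < p" "p \<le> 1" unfolding p_def n_def using min_div_card_bounds[OF finV neV] by auto
  have probs: "0 \<le> pv v \<and> pv v \<le> 1 \<and> pv v \<le> p * t v" if "v \<in> V" for v
    using pv[OF that] le_mult_nat_ceiling_divide[OF \<open>0 < p\<close>] unfolding t_def by auto
  have \<pi>: "distinct \<pi>" "set \<pi> = V" and J: "distinct \<sigma>J" "set \<sigma>J = {(v, i). v \<in> V \<and> i < t v}"
    using tour_pi tour_J unfolding master_tour_def t_def p_def n_def by auto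
  have bound: "?EI \<le> (exp 1 / (exp 1 - 1))^2 * ?EJ"
    using expected_latency_le_copies[of r \<pi> d \<sigma>J t p pv 0] metric \<pi> J consecutive p probs
    unfolding t_def p_def n_def by auto
  have "0 \<le> ?EJ"
    using bound expected_latency_nonneg[of r \<pi> d pv] metric \<pi> probs
    by (smt (verit) zero_le_mult_iff exp_gt_one divide_pos_pos zero_less_power)
  moreover have "(exp 1 / (exp 1 - 1))^2 \<le> (exp 1 / (exp 1 - 1))^3 * (1 + 1 / n)^3"
    using n by (intro order_trans[OF power_increasing[of 2 3]] mult_le_cancel_left1) auto
  ultimately show ?thesis
    using bound unfolding t_def p_def n_def by (meson mult_right_mono order_trans)
qed

end
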